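(* For every $\kappa\ge 2$, for the $\kappa$-state GM+I model on binary 4-taxon trees (the three trees $T_{ab|cd}$, $T_{ac|bd}$, $T_{ad|bc}$ on taxa $a,b,c,d$), the tree parameter is generically identifiable.
   Context: For a binary $n$-taxon tree $T$ (leaves labeled by the taxa, internal vertices of valence 3) with edge set $E$, the $\kappa$-state GM+I model has parameters $\mathbf s=(\delta,\pi_I,\pi_{GM},(M_e)_{e\in E})$: $\delta\in[0,1]$, probability vectors $\pi_I,\pi_{GM}\in[0,1]^\kappa$ ($\pi_{GM}$ the distribution at a chosen root $r$), and $\kappa\times\kappa$ Markov matrices $M_e$ for edges directed away from $r$. These form a stochastic parameter space $S_T\subseteq\mathbb R^N$, $N=2\kappa-1+|E|\kappa(\kappa-1)$. The joint leaf distribution $P=\phi_T(\mathbf s)$ has entries $p_{i_1\dots i_n}=\delta\,\epsilon(i_1,\dots,i_n)\pi_I(i_1)+(1-\delta)\sum_{(j_v)}\pi_{GM}(j_r)\prod_{e=(u\to w)}M_e(j_u,j_w)$, with $\epsilon=1$ if all indices equal and $0$ otherwise, the sum over all state assignments to vertices extending the leaf states. The tree parameter is generically identifiable for a collection of trees if for each tree $T$ there is a proper algebraic variety $X_T\subsetneq\mathbb C^N$ such that whenever $P\in\bigcup_T\phi_T(S_T\setminus X_T)$, there is a unique tree $T$ with $P\in\phi_T(S_T\setminus X_T)$. *)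

theory Defs
  imports Complex_Main
begin

definition rspace :: "nat \<Rightarrow> (nat \<Rightarrow> real) set" where
  "rspace N = {x. \<forall>i\<ge>N. x i = 0}"

definition cspace :: "nat \<Rightarrow> (nat \<Rightarrow> complex) set" where
  "cspace N = {z. \<forall>i\<ge>N. z i = 0}"

definition cvec :: "(nat \<Rightarrow> real) \<Rightarrow> (nat \<Rightarrow> complex)" where
  "cvec x = (\<lambda>i. complex_of_real (x i))"

inductive poly_fun :: "nat \<Rightarrow> ((nat \<Rightarrow> complex) \<Rightarrow> complex) \<Rightarrow> bool" for N where
  pf_const: "poly_fun N (\<lambda>z. c)"
| pf_var: "i < N \<Longrightarrow> poly_fun N (\<lambda>z. z i)"
| pf_add: "poly_fun N f \<Longrightarrow> poly_fun N g \<Longrightarrow> poly_fun N (\<lambda>z. f z + g z)"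
| pf_mult: "poly_fun N f \<Longrightarrow> poly_fun N g \<Longrightarrow> poly_fun N (\<lambda>z. f z * g z)"

definition alg_variety :: "nat \<Rightarrow> (nat \<Rightarrow> complex) set \<Rightarrow> bool" where
  "alg_variety N X \<longleftrightarrow>
     (\<exists>F. (\<forall>f\<in>F. poly_fun N f) \<and> X = {z \<in> cspace N. \<forall>f\<in>F. f z = 0})"

definition proper_variety :: "nat \<Rightarrow> (nat \<Rightarrow> complex) set \<Rightarrow> bool" where
  "proper_variety N X \<longleftrightarrow> alg_variety N X \<and> X \<subset> cspace N"

text \<open>Taxa a,b,c,d are 0,1,2,3. States are 0..kappa-1.\<close>

datatype quartet = T_ab_cd | T_ac_bd | T_ad_bc

text \<open>For tree xy|zw, returns the taxa (x,y,z,w) with x = a.\<close>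
fun qtaxa :: "quartet \<Rightarrow> nat \<times> nat \<times> nat \<times> nat" where
  "qtaxa T_ab_cd = (0, 1, 2, 3)"
| "qtaxa T_ac_bd = (0, 2, 1, 3)"
| "qtaxa T_ad_bc = (0, 3, 1, 2)"

text \<open>Number of free (stochastic) parameters: N = 2 kappa - 1 + |E| kappa (kappa - 1), |E| = 5.\<close>
definition nparams :: "nat \<Rightarrow> nat" where
  "nparams \<kappa> = 2 * \<kappa> - 1 + 5 * (\<kappa> * (\<kappa> - 1))"

text \<open>A probability vector stored with kappa-1 free coordinates starting at offset off;
  the last entry is 1 minus the others.\<close>
definition vecdec :: "nat \<Rightarrow> nat \<Rightarrow> (nat \<Rightarrow> real) \<Rightarrow> nat \<Rightarrow> real" where
  "vecdec \<kappa> off x i =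
     (if i < \<kappa> - 1 then x (off + i) else 1 - (\<Sum>j<\<kappa> - 1. x (off + j)))"

text \<open>Coordinates: x 0 = delta; pi_I at offset 1; pi_GM at offset kappa;
  Markov matrix of edge e (e < 5) at offset 2 kappa - 1 + e kappa (kappa-1), row-major,
  each row with kappa-1 free coordinates.\<close>
definition gm_delta :: "(nat \<Rightarrow> real) \<Rightarrow> real" where
  "gm_delta x = x 0"

definition gm_piI :: "nat \<Rightarrow> (nat \<Rightarrow> real) \<Rightarrow> nat \<Rightarrow> real" where
  "gm_piI \<kappa> x i = vecdec \<kappa> 1 x i"

definition gm_piGM :: "nat \<Rightarrow> (nat \<Rightarrow> real) \<Rightarrow> nat \<Rightarrow> real" where
  "gm_piGM \<kappa> x i = vecdec \<kappa> \<kappa> x i"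

definition gm_M :: "nat \<Rightarrow> (nat \<Rightarrow> real) \<Rightarrow> nat \<Rightarrow> nat \<Rightarrow> nat \<Rightarrow> real" where
  "gm_M \<kappa> x e i j = vecdec \<kappa> (2 * \<kappa> - 1 + e * (\<kappa> * (\<kappa> - 1)) + i * (\<kappa> - 1)) x j"

definition stoch_params :: "nat \<Rightarrow> (nat \<Rightarrow> real) set" where
  "stoch_params \<kappa> = {x \<in> rspace (nparams \<kappa>).
      0 \<le> gm_delta x \<and> gm_delta x \<le> 1 \<and>
      (\<forall>i<\<kappa>. 0 \<le> gm_piI \<kappa> x i \<and> gm_piI \<kappa> x i \<le> 1) \<and>
      (\<forall>i<\<kappa>. 0 \<le> gm_piGM \<kappa> x i \<and> gm_piGM \<kappa> x i \<le> 1) \<and>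
      (\<forall>e<5. \<forall>i<\<kappa>. \<forall>j<\<kappa>. 0 \<le> gm_M \<kappa> x e i j \<and> gm_M \<kappa> x e i j \<le> 1)}"

text \<open>Tree xy|zw rooted at the internal vertex u adjacent to x,y; v is the other internal
  vertex. Edges (directed away from u): 0: u->x, 1: u->y, 2: u->v, 3: v->z, 4: v->w.\<close>
definition gm_phi :: "nat \<Rightarrow> quartet \<Rightarrow> (nat \<Rightarrow> real) \<Rightarrow> (nat \<times> nat \<times> nat \<times> nat \<Rightarrow> real)" where
  "gm_phi \<kappa> T x = (\<lambda>(ia, ib, ic, id).
     if ia < \<kappa> \<and> ib < \<kappa> \<and> ic < \<kappa> \<and> id < \<kappa> then
       (let st = (\<lambda>t::nat. if t = 0 then ia else if t = 1 then ib else if t = 2 then ic else id);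
            (tx, ty, tz, tw) = qtaxa T
        in gm_delta x * (if ia = ib \<and> ib = ic \<and> ic = id then 1 else 0) * gm_piI \<kappa> x ia
           + (1 - gm_delta x) *
             (\<Sum>ju<\<kappa>. \<Sum>jv<\<kappa>. gm_piGM \<kappa> x ju * gm_M \<kappa> x 0 ju (st tx) * gm_M \<kappa> x 1 ju (st ty)
                 * gm_M \<kappa> x 2 ju jv * gm_M \<kappa> x 3 jv (st tz) * gm_M \<kappa> x 4 jv (st tw)))
     else 0)"

definition gm_image :: "nat \<Rightarrow> quartet \<Rightarrow> (nat \<Rightarrow> complex) set \<Rightarrow> (nat \<times> nat \<times> nat \<times> nat \<Rightarrow> real) set" where
  "gm_image \<kappa> T X = gm_phi \<kappa> T ` {x \<in> stoch_params \<kappa>. cvec x \<notin> X}"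

end

theory Submission
  imports Defs "Jordan_Normal_Form.Determinant"
begin

text \<open>Off the constant patterns (i,i,i,i), the only entries to which the invariable-site class
  contributes, the \<kappa>^2 \<times> \<kappa>^2 flattening of a GM+I distribution along the split of its own
  tree factors through the \<kappa> states of an internal vertex, so all its (\<kappa>+1)-minors avoiding
  constant patterns vanish. Take X_T to be the common zero set of the products m1(\<phi>_T) m2(\<phi>_T),
  where m1, m2 range over such minors for the two trees other than T. If P = \<phi>_T(s) with s
  outside X_T, then P has a nonvanishing such minor for each other tree T', hence is not
  \<phi>_T'(s') for any s'. X_T is proper: at the parameter without invariable sites, with uniform
  root distribution and internal edge, identity matrices on the edges to a and to the first taxon
  across the split, and a cyclic shift on the two remaining pendant edges, a suitable submatrix of
  each other flattening of \<phi>_T is a nonzero multiple of the identity.\<close>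

lemma poly_fun_sum:
  "finite A \<Longrightarrow> (\<And>a. a \<in> A \<Longrightarrow> poly_fun N (f a)) \<Longrightarrow> poly_fun N (\<lambda>z. \<Sum>a\<in>A. f a z)"
  by (induction A rule: finite_induct) (simp_all add: poly_fun.intros)

lemma poly_fun_prod:
  "finite A \<Longrightarrow> (\<And>a. a \<in> A \<Longrightarrow> poly_fun N (f a)) \<Longrightarrow> poly_fun N (\<lambda>z. \<Prod>a\<in>A. f a z)"
  by (induction A rule: finite_induct) (simp_all add: poly_fun.intros)

lemma poly_fun_diff:
  assumes "poly_fun N f" "poly_fun N g"
  shows "poly_fun N (\<lambda>z. f z - g z)"
proof -
  have "poly_fun N (\<lambda>z. f z + (- 1) * g z)"
    by (intro pf_add pf_mult pf_const assms)
  then show ?thesis by simp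
qed

lemma poly_fun_if: "poly_fun N f \<Longrightarrow> poly_fun N g \<Longrightarrow> poly_fun N (\<lambda>z. if b then f z else g z)"
  by (cases b) simp_all

lemma poly_fun_det:
  assumes "\<And>i j. i < n \<Longrightarrow> j < n \<Longrightarrow> poly_fun N (\<lambda>z. f z (i, j))"
  shows "poly_fun N (\<lambda>z. det (mat n n (f z)))"
  unfolding det_def'[OF mat_carrier]
  by (intro poly_fun_sum poly_fun_prod pf_mult pf_const finite_permutations finite_atLeastLessThan)
    (auto simp: assms permutes_in_image)

lemma det_zero_last_col:
  assumes "\<And>i. i < Suc n \<Longrightarrow> f (i, n) = (0::'a::comm_ring_1)"
  shows "det (mat (Suc n) (Suc n) f) = 0"
  unfolding det_col[OF mat_carrier]
  by (rule sum.neutral) (auto intro!: prod_zero bexI[of _ n] simp: assms permutes_in_image)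

lemma det_factor_through_eq_0:
  fixes a :: "nat \<Rightarrow> nat \<Rightarrow> 'a::comm_ring_1"
  shows "det (mat (Suc n) (Suc n) (\<lambda>(k, l). \<Sum>j<n. a k j * b j l)) = 0"
proof -
  define A where "A = mat (Suc n) (Suc n) (\<lambda>(k, j). if j < n then a k j else 0)"
  define B where "B = mat (Suc n) (Suc n) (\<lambda>(j, l). b j l)"
  have "mat (Suc n) (Suc n) (\<lambda>(k, l). \<Sum>j<n. a k j * b j l) = A * B"
    by (rule eq_matI) (simp_all add: A_def B_def scalar_prod_def lessThan_Suc_atMost[symmetric]
        atLeast0LessThan)
  moreover have "det A = 0"
    unfolding A_def by (rule det_zero_last_col) simp
  ultimately show ?thesis
    using det_mult[of A "Suc n" B] by (simp add: A_def B_def)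
qed

definition quartet_dist ::
    "nat \<Rightarrow> quartet \<Rightarrow> 'a::comm_ring_1 \<Rightarrow> (nat \<Rightarrow> 'a) \<Rightarrow> (nat \<Rightarrow> 'a) \<Rightarrow> (nat \<Rightarrow> nat \<Rightarrow> nat \<Rightarrow> 'a)
      \<Rightarrow> nat \<times> nat \<times> nat \<times> nat \<Rightarrow> 'a" where
  "quartet_dist \<kappa> T \<delta> \<pi>I \<pi>GM M = (\<lambda>(ia, ib, ic, id).
     if ia < \<kappa> \<and> ib < \<kappa> \<and> ic < \<kappa> \<and> id < \<kappa> then
       (let st = (\<lambda>t::nat. if t = 0 then ia else if t = 1 then ib else if t = 2 then ic else id);
            (tx, ty, tz, tw) = qtaxa T
        in \<delta> * (if ia = ib \<and> ib = ic \<and> ic = id then 1 else 0) * \<pi>I ia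
           + (1 - \<delta>) *
             (\<Sum>ju<\<kappa>. \<Sum>jv<\<kappa>. \<pi>GM ju * M 0 ju (st tx) * M 1 ju (st ty)
                 * M 2 ju jv * M 3 jv (st tz) * M 4 jv (st tw)))
     else 0)"

fun split_index :: "quartet \<Rightarrow> nat \<times> nat \<Rightarrow> nat \<times> nat \<Rightarrow> nat \<times> nat \<times> nat \<times> nat" where
  "split_index T_ab_cd (p1, p2) (q1, q2) = (p1, p2, q1, q2)"
| "split_index T_ac_bd (p1, p2) (q1, q2) = (p1, q1, p2, q2)"
| "split_index T_ad_bc (p1, p2) (q1, q2) = (p1, q1, q2, p2)"

definition split_minor ::
    "nat \<Rightarrow> quartet \<Rightarrow> (nat \<Rightarrow> nat \<times> nat) \<Rightarrow> (nat \<Rightarrow> nat \<times> nat)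
      \<Rightarrow> (nat \<times> nat \<times> nat \<times> nat \<Rightarrow> 'a::comm_ring_1) \<Rightarrow> 'a" where
  "split_minor \<kappa> T r c P = det (mat (Suc \<kappa>) (Suc \<kappa>) (\<lambda>(k, l). P (split_index T (r k) (c l))))"

text \<open>The condition on pairs says that no entry of the submatrix sits at a constant pattern.\<close>
definition admissible_minor :: "nat \<Rightarrow> (nat \<Rightarrow> nat \<times> nat) \<Rightarrow> (nat \<Rightarrow> nat \<times> nat) \<Rightarrow> bool" where
  "admissible_minor \<kappa> r c \<longleftrightarrow>
     (\<forall>k\<le>\<kappa>. r k \<in> {..<\<kappa>} \<times> {..<\<kappa>} \<and> c k \<in> {..<\<kappa>} \<times> {..<\<kappa>}) \<and>
     (\<forall>k\<le>\<kappa>. \<forall>l\<le>\<kappa>. r k = c l \<longrightarrow> fst (r k) \<noteq> snd (r k))"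

lemma quartet_dist_split_index:
  assumes "p1 < \<kappa>" "p2 < \<kappa>" "q1 < \<kappa>" "q2 < \<kappa>"
  shows "quartet_dist \<kappa> T \<delta> \<pi>I \<pi>GM M (split_index T (p1, p2) (q1, q2)) =
    \<delta> * (if p1 = p2 \<and> p2 = q1 \<and> q1 = q2 then 1 else 0) * \<pi>I p1 + (1 - \<delta>) *
    (\<Sum>ju<\<kappa>. \<Sum>jv<\<kappa>. \<pi>GM ju * M 0 ju p1 * M 1 ju p2 * M 2 ju jv * M 3 jv q1 * M 4 jv q2)"
  using assms by (cases T) (simp_all add: quartet_dist_def)

lemma split_minor_own_tree_eq_0:
  assumes adm: "admissible_minor \<kappa> r c"
  shows "split_minor \<kappa> T r c (quartet_dist \<kappa> T \<delta> \<pi>I \<pi>GM M) = 0"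
proof -
  define a where "a p j = (1 - \<delta>) * \<pi>GM j * M 0 j (fst p) * M 1 j (snd p)" for p j
  define b where "b j q = (\<Sum>jv<\<kappa>. M 2 j jv * M 3 jv (fst q) * M 4 jv (snd q))" for j q
  have entry: "quartet_dist \<kappa> T \<delta> \<pi>I \<pi>GM M (split_index T (r k) (c l))
      = (\<Sum>j<\<kappa>. a (r k) j * b j (c l))" if "k < Suc \<kappa>" "l < Suc \<kappa>" for k l
  proof -
    obtain p1 p2 q1 q2 where rc: "r k = (p1, p2)" "c l = (q1, q2)" by fastforce
    have range: "p1 < \<kappa>" "p2 < \<kappa>" "q1 < \<kappa>" "q2 < \<kappa>"
      and nonconst: "\<not> (p1 = p2 \<and> p2 = q1 \<and> q1 = q2)"
      using adm that rc unfolding admissible_minor_def by (force simp: less_Suc_eq_le)+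
    show ?thesis
      unfolding rc quartet_dist_split_index[OF range] if_not_P[OF nonconst]
      by (simp add: a_def b_def sum_distrib_left mult_ac)
  qed
  have "mat (Suc \<kappa>) (Suc \<kappa>) (\<lambda>(k, l). quartet_dist \<kappa> T \<delta> \<pi>I \<pi>GM M (split_index T (r k) (c l)))
      = mat (Suc \<kappa>) (Suc \<kappa>) (\<lambda>(k, l). \<Sum>j<\<kappa>. a (r k) j * b j (c l))"
    by (rule eq_matI) (simp_all add: entry)
  then show ?thesis
    unfolding split_minor_def by (simp add: det_factor_through_eq_0)
qed

definition cyc_succ :: "nat \<Rightarrow> nat \<Rightarrow> nat" where
  "cyc_succ \<kappa> a = (if Suc a = \<kappa> then 0 else Suc a)"

definition cyc_pred :: "nat \<Rightarrow> nat \<Rightarrow> nat" where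
  "cyc_pred \<kappa> a = (if a = 0 then \<kappa> - 1 else a - 1)"

lemma cyc_succ_less: "a < \<kappa> \<Longrightarrow> cyc_succ \<kappa> a < \<kappa>"
  by (simp add: cyc_succ_def)

lemma cyc_succ_eq_iff: "a < \<kappa> \<Longrightarrow> b < \<kappa> \<Longrightarrow> b = cyc_succ \<kappa> a \<longleftrightarrow> a = cyc_pred \<kappa> b"
  by (auto simp: cyc_succ_def cyc_pred_def)

definition witness_matrix :: "nat \<Rightarrow> nat \<Rightarrow> nat \<Rightarrow> nat \<Rightarrow> 'a::field" where
  "witness_matrix \<kappa> e i j =
     (if e = 2 then 1 / of_nat \<kappa>
      else if e = 1 \<or> e = 4 then (if j = cyc_succ \<kappa> i then 1 else 0)
      else (if j = i then 1 else 0))"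

lemma witness_matrix_row_sum:
  assumes "i < \<kappa>"
  shows "(\<Sum>j<\<kappa>. witness_matrix \<kappa> e i j) = (1::'a::field_char_0)"
  using assms cyc_succ_less[OF assms] unfolding witness_matrix_def
  by (cases "e = 2"; cases "e = 1 \<or> e = 4") simp_all

lemma quartet_dist_witness:
  fixes \<pi>GM :: "nat \<Rightarrow> 'a::field_char_0"
  assumes uniform: "\<And>i. i < \<kappa> \<Longrightarrow> \<pi>GM i = 1 / of_nat \<kappa>"
    and M: "\<And>e i j. e < 5 \<Longrightarrow> i < \<kappa> \<Longrightarrow> j < \<kappa> \<Longrightarrow> M e i j = witness_matrix \<kappa> e i j"
    and s: "s0 < \<kappa>" "s1 < \<kappa>" "s2 < \<kappa>" "s3 < \<kappa>"
    and T: "qtaxa T = (tx, ty, tz, tw)"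
    and st: "st = (\<lambda>t::nat. if t = 0 then s0 else if t = 1 then s1 else if t = 2 then s2 else s3)"
  shows "quartet_dist \<kappa> T 0 \<pi>I \<pi>GM M (s0, s1, s2, s3) =
    (if st ty = cyc_succ \<kappa> (st tx) \<and> st tw = cyc_succ \<kappa> (st tz) then 1 / of_nat \<kappa> ^ 2 else 0)"
proof -
  define K where
    "K = (if st ty = cyc_succ \<kappa> (st tx) \<and> st tw = cyc_succ \<kappa> (st tz) then 1 / of_nat \<kappa> ^ 2 else (0::'a))"
  have st_less: "st t < \<kappa>" for t
    using s unfolding st by auto
  have "(\<Sum>ju<\<kappa>. \<Sum>jv<\<kappa>. \<pi>GM ju * M 0 ju (st tx) * M 1 ju (st ty) * M 2 ju jv * M 3 jv (st tz)
      * M 4 jv (st tw)) = (\<Sum>ju<\<kappa>. \<Sum>jv<\<kappa>. if jv = st tz then if ju = st tx then K else 0 else 0)"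
    using st_less by (intro sum.cong refl) (simp add: uniform M witness_matrix_def K_def power2_eq_square)
  also have "\<dots> = K"
    using st_less by simp
  finally show ?thesis
    using s by (simp add: quartet_dist_def T K_def flip: st)
qed

text \<open>At the witness parameter, row p of the T'-flattening of \<phi>_T is nonzero exactly in column
  witness_partner \<kappa> T T' p. The value for T = T' is irrelevant.\<close>
fun witness_partner :: "nat \<Rightarrow> quartet \<Rightarrow> quartet \<Rightarrow> nat \<times> nat \<Rightarrow> nat \<times> nat" where
  "witness_partner \<kappa> T_ab_cd T_ac_bd (p1, p2) = (cyc_succ \<kappa> p1, cyc_succ \<kappa> p2)"
| "witness_partner \<kappa> T_ab_cd T_ad_bc (p1, p2) = (cyc_succ \<kappa> p1, cyc_pred \<kappa> p2)"
| "witness_partner \<kappa> T_ac_bd T_ab_cd (p1, p2) = (cyc_succ \<kappa> p1, cyc_succ \<kappa> p2)"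
| "witness_partner \<kappa> T_ac_bd T_ad_bc (p1, p2) = (cyc_pred \<kappa> p2, cyc_succ \<kappa> p1)"
| "witness_partner \<kappa> T_ad_bc T_ab_cd (p1, p2) = (cyc_succ \<kappa> p2, cyc_succ \<kappa> p1)"
| "witness_partner \<kappa> T_ad_bc T_ac_bd (p1, p2) = (cyc_pred \<kappa> p2, cyc_succ \<kappa> p1)"
| "witness_partner \<kappa> _ _ p = p"

lemma quartet_dist_witness_split_index:
  fixes \<pi>GM :: "nat \<Rightarrow> 'a::field_char_0"
  assumes uniform: "\<And>i. i < \<kappa> \<Longrightarrow> \<pi>GM i = 1 / of_nat \<kappa>"
    and M: "\<And>e i j. e < 5 \<Longrightarrow> i < \<kappa> \<Longrightarrow> j < \<kappa> \<Longrightarrow> M e i j = witness_matrix \<kappa> e i j"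
    and "T \<noteq> T'" "p \<in> {..<\<kappa>} \<times> {..<\<kappa>}" "q \<in> {..<\<kappa>} \<times> {..<\<kappa>}"
  shows "quartet_dist \<kappa> T 0 \<pi>I \<pi>GM M (split_index T' p q) =
    (if q = witness_partner \<kappa> T T' p then 1 / of_nat \<kappa> ^ 2 else 0)"
  using assms(3-)
  by (cases p; cases q; cases T; cases T') (auto simp: quartet_dist_witness[OF uniform M] cyc_succ_eq_iff)

text \<open>The \<kappa> pairs (a, a+1 mod \<kappa>) together with the constant pair (0, 0), which is admissible as
  a row because its partner is not constant.\<close>
definition witness_rows :: "nat \<Rightarrow> nat \<Rightarrow> nat \<times> nat" where
  "witness_rows \<kappa> k = (if k = 0 then (0, 0) else (k - 1, cyc_succ \<kappa> (k - 1)))"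

lemma witness_rows_less: "2 \<le> \<kappa> \<Longrightarrow> k \<le> \<kappa> \<Longrightarrow> witness_rows \<kappa> k \<in> {..<\<kappa>} \<times> {..<\<kappa>}"
  by (auto simp: witness_rows_def cyc_succ_def)

lemma witness_partner_less:
  "p \<in> {..<\<kappa>} \<times> {..<\<kappa>} \<Longrightarrow> witness_partner \<kappa> T T' p \<in> {..<\<kappa>} \<times> {..<\<kappa>}"
  by (cases p; cases T; cases T') (auto simp: cyc_succ_def cyc_pred_def)

lemma witness_partner_rows_ne_0:
  "2 \<le> \<kappa> \<Longrightarrow> l \<le> \<kappa> \<Longrightarrow> T \<noteq> T' \<Longrightarrow> witness_partner \<kappa> T T' (witness_rows \<kappa> l) \<noteq> (0, 0)"
  by (cases T; cases T') (auto simp: witness_rows_def cyc_succ_def cyc_pred_def split: if_splits)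

lemma witness_partner_rows_inj:
  "2 \<le> \<kappa> \<Longrightarrow> T \<noteq> T' \<Longrightarrow> k \<le> \<kappa> \<Longrightarrow> l \<le> \<kappa> \<Longrightarrow>
    witness_partner \<kappa> T T' (witness_rows \<kappa> k) = witness_partner \<kappa> T T' (witness_rows \<kappa> l) \<Longrightarrow> k = l"
  by (cases T; cases T') (auto simp: witness_rows_def cyc_succ_def cyc_pred_def split: if_splits)

lemma admissible_minor_witness:
  assumes "2 \<le> \<kappa>" "T \<noteq> T'"
  shows "admissible_minor \<kappa> (witness_rows \<kappa>) (witness_partner \<kappa> T T' \<circ> witness_rows \<kappa>)"
proof -
  have "fst (witness_rows \<kappa> k) \<noteq> snd (witness_rows \<kappa> k)" if "0 < k" "k \<le> \<kappa>" for k
    using that assms(1) by (auto simp: witness_rows_def cyc_succ_def)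
  moreover have "witness_rows \<kappa> 0 = (0, 0)"
    by (simp add: witness_rows_def)
  ultimately show ?thesis
    using assms witness_rows_less witness_partner_less witness_partner_rows_ne_0
    unfolding admissible_minor_def by (metis comp_apply gr0I)
qed

lemma split_minor_witness_ne_0:
  fixes \<pi>GM :: "nat \<Rightarrow> 'a::field_char_0"
  assumes \<kappa>: "2 \<le> \<kappa>" and T: "T \<noteq> T'"
    and uniform: "\<And>i. i < \<kappa> \<Longrightarrow> \<pi>GM i = 1 / of_nat \<kappa>"
    and M: "\<And>e i j. e < 5 \<Longrightarrow> i < \<kappa> \<Longrightarrow> j < \<kappa> \<Longrightarrow> M e i j = witness_matrix \<kappa> e i j"
  shows "split_minor \<kappa> T' (witness_rows \<kappa>) (witness_partner \<kappa> T T' \<circ> witness_rows \<kappa>)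
    (quartet_dist \<kappa> T 0 \<pi>I \<pi>GM M) \<noteq> 0"
proof -
  let ?c = "1 / of_nat \<kappa> ^ 2 :: 'a"
  have "quartet_dist \<kappa> T 0 \<pi>I \<pi>GM M
      (split_index T' (witness_rows \<kappa> k) (witness_partner \<kappa> T T' (witness_rows \<kappa> l)))
    = (if k = l then ?c else 0)" if "k \<le> \<kappa>" "l \<le> \<kappa>" for k l
    using quartet_dist_witness_split_index[OF uniform M T] witness_partner_rows_inj[OF \<kappa> T that]
      witness_rows_less[OF \<kappa>] witness_partner_less that by auto
  then have "mat (Suc \<kappa>) (Suc \<kappa>) (\<lambda>(k, l). quartet_dist \<kappa> T 0 \<pi>I \<pi>GM M
      (split_index T' (witness_rows \<kappa> k) ((witness_partner \<kappa> T T' \<circ> witness_rows \<kappa>) l)))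
    = ?c \<cdot>\<^sub>m 1\<^sub>m (Suc \<kappa>)"
    by (intro eq_matI) (simp_all add: less_Suc_eq_le)
  then show ?thesis
    using \<kappa> by (simp add: split_minor_def)
qed

definition gm_vec :: "nat \<Rightarrow> nat \<Rightarrow> (nat \<Rightarrow> 'a::comm_ring_1) \<Rightarrow> nat \<Rightarrow> 'a" where
  "gm_vec \<kappa> off z i = (if i < \<kappa> - 1 then z (off + i) else 1 - (\<Sum>j<\<kappa> - 1. z (off + j)))"

definition gm_row_offset :: "nat \<Rightarrow> nat \<Rightarrow> nat \<Rightarrow> nat" where
  "gm_row_offset \<kappa> e i = 2 * \<kappa> - 1 + e * (\<kappa> * (\<kappa> - 1)) + i * (\<kappa> - 1)"

definition gm_phi_poly :: "nat \<Rightarrow> quartet \<Rightarrow> (nat \<Rightarrow> 'a::comm_ring_1) \<Rightarrow> nat \<times> nat \<times> nat \<times> nat \<Rightarrow> 'a" where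
  "gm_phi_poly \<kappa> T z =
     quartet_dist \<kappa> T (z 0) (gm_vec \<kappa> 1 z) (gm_vec \<kappa> \<kappa> z) (\<lambda>e i. gm_vec \<kappa> (gm_row_offset \<kappa> e i) z)"

lemma vecdec_eq_gm_vec: "vecdec = gm_vec"
  by (simp add: fun_eq_iff vecdec_def gm_vec_def)

lemma gm_phi_eq_gm_phi_poly: "gm_phi \<kappa> T x = gm_phi_poly \<kappa> T x"
  unfolding gm_phi_def gm_phi_poly_def quartet_dist_def gm_delta_def gm_piI_def gm_piGM_def
    gm_M_def vecdec_eq_gm_vec gm_row_offset_def ..

lemma gm_vec_cvec: "gm_vec \<kappa> off (cvec x) i = complex_of_real (gm_vec \<kappa> off x i)"
  by (simp add: gm_vec_def cvec_def)

lemma gm_phi_poly_cvec: "gm_phi_poly \<kappa> T (cvec x) s = complex_of_real (gm_phi \<kappa> T x s)"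
  by (cases T; cases s)
    (simp_all add: gm_phi_eq_gm_phi_poly gm_phi_poly_def quartet_dist_def gm_vec_cvec,
      simp_all add: cvec_def)

text \<open>The variables of poly_fun N are only the coordinates below N.\<close>
definition truncate_vec :: "nat \<Rightarrow> (nat \<Rightarrow> complex) \<Rightarrow> nat \<Rightarrow> complex" where
  "truncate_vec N z i = (if i < N then z i else 0)"

lemma poly_fun_truncate_vec: "poly_fun N (\<lambda>z. truncate_vec N z i)"
  by (cases "i < N") (simp_all add: truncate_vec_def poly_fun.intros)

lemma truncate_vec_cspace: "z \<in> cspace N \<Longrightarrow> truncate_vec N z = z"
  by (auto simp: truncate_vec_def cspace_def)

lemma poly_fun_gm_vec: "poly_fun N (\<lambda>z. gm_vec \<kappa> off (truncate_vec N z) i)"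
  unfolding gm_vec_def
  by (intro poly_fun_if poly_fun_diff poly_fun_sum poly_fun_truncate_vec pf_const finite_lessThan)

lemma poly_fun_gm_phi_poly: "poly_fun N (\<lambda>z. gm_phi_poly \<kappa> T (truncate_vec N z) s)"
proof -
  obtain ia ib ic id where s: "s = (ia, ib, ic, id)" by (cases s)
  obtain tx ty tz tw where T: "qtaxa T = (tx, ty, tz, tw)" by (cases "qtaxa T")
  show ?thesis
    unfolding s T gm_phi_poly_def quartet_dist_def Let_def prod.case
    by (intro poly_fun_if pf_add pf_mult poly_fun_diff poly_fun_sum poly_fun_gm_vec
        poly_fun_truncate_vec pf_const finite_lessThan)
qed

lemma poly_fun_split_minor:
  "poly_fun N (\<lambda>z. split_minor \<kappa> T' r c (gm_phi_poly \<kappa> T (truncate_vec N z)))"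
  unfolding split_minor_def by (rule poly_fun_det) (simp add: poly_fun_gm_phi_poly)

lemma split_minor_gm_phi_poly_own_tree_eq_0:
  "admissible_minor \<kappa> r c \<Longrightarrow> split_minor \<kappa> T r c (gm_phi_poly \<kappa> T z) = 0"
  unfolding gm_phi_poly_def by (rule split_minor_own_tree_eq_0)

text \<open>Inverse of the coordinate layout of \<^const>\<open>gm_delta\<close>, \<^const>\<open>gm_piI\<close>,
  \<^const>\<open>gm_piGM\<close> and \<^const>\<open>gm_M\<close>: the last entry of every probability vector is
  dropped.\<close>
definition gm_encode ::
    "nat \<Rightarrow> 'a \<Rightarrow> (nat \<Rightarrow> 'a) \<Rightarrow> (nat \<Rightarrow> 'a) \<Rightarrow> (nat \<Rightarrow> nat \<Rightarrow> nat \<Rightarrow> 'a) \<Rightarrow> nat \<Rightarrow> 'a::zero" where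
  "gm_encode \<kappa> \<delta> \<pi>I \<pi>GM M n =
     (if nparams \<kappa> \<le> n then 0
      else if n = 0 then \<delta>
      else if n < \<kappa> then \<pi>I (n - 1)
      else if n < 2 * \<kappa> - 1 then \<pi>GM (n - \<kappa>)
      else
        (let m = n - (2 * \<kappa> - 1); K = \<kappa> * (\<kappa> - 1)
         in M (m div K) (m mod K div (\<kappa> - 1)) (m mod K mod (\<kappa> - 1))))"

lemma gm_encode_cspace: "gm_encode \<kappa> \<delta> \<pi>I \<pi>GM M \<in> cspace (nparams \<kappa>)"
  by (simp add: cspace_def gm_encode_def)

lemma gm_encode_piGM_coord:
  assumes "i < \<kappa> - 1"
  shows "gm_encode \<kappa> \<delta> \<pi>I \<pi>GM M (\<kappa> + i) = \<pi>GM i"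
proof -
  have "\<kappa> + i < 2 * \<kappa> - 1" "2 * \<kappa> - 1 \<le> nparams \<kappa>" "\<kappa> + i \<noteq> 0"
    using assms by (auto simp: nparams_def)
  then show ?thesis
    by (auto simp: gm_encode_def)
qed

lemma gm_encode_row_coord:
  assumes e: "e < 5" and i: "i < \<kappa>" and j: "j < \<kappa> - 1"
  shows "gm_encode \<kappa> \<delta> \<pi>I \<pi>GM M (gm_row_offset \<kappa> e i + j) = M e i j"
proof -
  define K where "K = \<kappa> * (\<kappa> - 1)"
  define t where "t = i * (\<kappa> - 1) + j"
  define n where "n = gm_row_offset \<kappa> e i + j"
  have t: "t < K"
  proof -
    have "t < Suc i * (\<kappa> - 1)"
      using j by (simp add: t_def)
    also have "\<dots> \<le> K"
      unfolding K_def by (rule mult_le_mono1) (use i in simp)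
    finally show ?thesis .
  qed
  have n: "n = (2 * \<kappa> - 1) + (e * K + t)"
    by (simp add: n_def gm_row_offset_def K_def t_def)
  have "e * K + K \<le> 5 * K"
    using e by simp
  then have "n < nparams \<kappa>"
    unfolding n nparams_def K_def[symmetric] using t by linarith
  moreover have "n \<noteq> 0" "\<not> n < 2 * \<kappa> - 1" "\<not> n < \<kappa>" "n - (2 * \<kappa> - 1) = e * K + t"
    using i unfolding n by linarith+
  moreover have "(e * K + t) div K = e" "(e * K + t) mod K = t" "t div (\<kappa> - 1) = i" "t mod (\<kappa> - 1) = j"
    using t j by (simp_all add: t_def)
  ultimately show ?thesis
    unfolding n_def[symmetric] gm_encode_def Let_def K_def[symmetric] by simp
qed

lemma gm_vec_eqI:
  assumes "\<And>j. j < \<kappa> - 1 \<Longrightarrow> z (off + j) = v j" and "(\<Sum>j<\<kappa>. v j) = 1" and "j < \<kappa>"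
  shows "gm_vec \<kappa> off z j = v j"
proof (cases "j < \<kappa> - 1")
  case False
  then have "\<kappa> = Suc j"
    using assms(3) by simp
  then show ?thesis
    using assms(1,2) False by (simp add: gm_vec_def algebra_simps)
qed (simp add: gm_vec_def assms(1))

definition witness_point :: "nat \<Rightarrow> nat \<Rightarrow> complex" where
  "witness_point \<kappa> = gm_encode \<kappa> 0 (\<lambda>_. 0) (\<lambda>_. 1 / of_nat \<kappa>) (witness_matrix \<kappa>)"

lemma split_minor_witness_point_ne_0:
  assumes \<kappa>: "2 \<le> \<kappa>" and T: "T \<noteq> T'"
  shows "split_minor \<kappa> T' (witness_rows \<kappa>) (witness_partner \<kappa> T T' \<circ> witness_rows \<kappa>)
    (gm_phi_poly \<kappa> T (witness_point \<kappa>)) \<noteq> 0"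
proof -
  have \<delta>: "witness_point \<kappa> 0 = 0"
    by (simp add: witness_point_def gm_encode_def)
  have uniform: "gm_vec \<kappa> \<kappa> (witness_point \<kappa>) i = 1 / of_nat \<kappa>" if "i < \<kappa>" for i
    using that \<kappa> by (intro gm_vec_eqI) (simp_all add: witness_point_def gm_encode_piGM_coord)
  have M: "gm_vec \<kappa> (gm_row_offset \<kappa> e i) (witness_point \<kappa>) j = witness_matrix \<kappa> e i j"
    if "e < 5" "i < \<kappa>" "j < \<kappa>" for e i j
    using that
    by (intro gm_vec_eqI) (simp_all add: witness_point_def gm_encode_row_coord witness_matrix_row_sum)
  show ?thesis
    unfolding gm_phi_poly_def \<delta> by (rule split_minor_witness_ne_0[OF \<kappa> T uniform M])
qed

lemma quartet_other_two: "\<exists>T1 T2. T1 \<noteq> T \<and> T2 \<noteq> T \<and> T1 \<noteq> (T2::quartet)"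
  by (cases T) (metis quartet.distinct(2,4,6))+

lemma quartet_other_cases:
  "T1 \<noteq> T \<Longrightarrow> T2 \<noteq> T \<Longrightarrow> T1 \<noteq> T2 \<Longrightarrow> T' \<noteq> T \<Longrightarrow> T' = T1 \<or> T' = (T2::quartet)"
  by (cases T; cases T'; cases T1; cases T2) auto

definition minor_poly :: "nat \<Rightarrow> quartet \<Rightarrow> quartet \<Rightarrow> (nat \<Rightarrow> nat \<times> nat) \<Rightarrow> (nat \<Rightarrow> nat \<times> nat)
    \<Rightarrow> (nat \<Rightarrow> complex) \<Rightarrow> complex" where
  "minor_poly \<kappa> T T' r c z = split_minor \<kappa> T' r c (gm_phi_poly \<kappa> T (truncate_vec (nparams \<kappa>) z))"

definition exceptional_polys :: "nat \<Rightarrow> quartet \<Rightarrow> ((nat \<Rightarrow> complex) \<Rightarrow> complex) set" where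
  "exceptional_polys \<kappa> T =
     {(\<lambda>z. minor_poly \<kappa> T T1 r1 c1 z * minor_poly \<kappa> T T2 r2 c2 z) | T1 T2 r1 c1 r2 c2.
        T1 \<noteq> T \<and> T2 \<noteq> T \<and> T1 \<noteq> T2 \<and> admissible_minor \<kappa> r1 c1 \<and> admissible_minor \<kappa> r2 c2}"

definition exceptional_set :: "nat \<Rightarrow> quartet \<Rightarrow> (nat \<Rightarrow> complex) set" where
  "exceptional_set \<kappa> T = {z \<in> cspace (nparams \<kappa>). \<forall>f\<in>exceptional_polys \<kappa> T. f z = 0}"

lemma exceptional_polysI:
  assumes "T1 \<noteq> T" "T2 \<noteq> T" "T1 \<noteq> T2" "admissible_minor \<kappa> r1 c1" "admissible_minor \<kappa> r2 c2"
  shows "(\<lambda>z. minor_poly \<kappa> T T1 r1 c1 z * minor_poly \<kappa> T T2 r2 c2 z) \<in> exceptional_polys \<kappa> T"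
  unfolding exceptional_polys_def using assms by blast

lemma poly_fun_exceptional_polys: "f \<in> exceptional_polys \<kappa> T \<Longrightarrow> poly_fun (nparams \<kappa>) f"
  unfolding exceptional_polys_def minor_poly_def by (auto intro!: pf_mult poly_fun_split_minor)

lemma proper_variety_exceptional_set:
  assumes \<kappa>: "2 \<le> \<kappa>"
  shows "proper_variety (nparams \<kappa>) (exceptional_set \<kappa> T)"
proof -
  obtain T1 T2 where T12: "T1 \<noteq> T" "T2 \<noteq> T" "T1 \<noteq> T2"
    using quartet_other_two by blast
  let ?f = "\<lambda>z. minor_poly \<kappa> T T1 (witness_rows \<kappa>) (witness_partner \<kappa> T T1 \<circ> witness_rows \<kappa>) z
    * minor_poly \<kappa> T T2 (witness_rows \<kappa>) (witness_partner \<kappa> T T2 \<circ> witness_rows \<kappa>) z"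
  have w: "witness_point \<kappa> \<in> cspace (nparams \<kappa>)"
    by (simp add: witness_point_def gm_encode_cspace)
  have f_mem: "?f \<in> exceptional_polys \<kappa> T"
    using T12 by (intro exceptional_polysI admissible_minor_witness \<kappa>) auto
  have f_ne_0: "?f (witness_point \<kappa>) \<noteq> 0"
    unfolding minor_poly_def truncate_vec_cspace[OF w]
    using split_minor_witness_point_ne_0[OF \<kappa>] T12 by simp
  have "witness_point \<kappa> \<notin> exceptional_set \<kappa> T"
  proof
    assume "witness_point \<kappa> \<in> exceptional_set \<kappa> T"
    then have "\<forall>f\<in>exceptional_polys \<kappa> T. f (witness_point \<kappa>) = 0"
      by (simp add: exceptional_set_def)
    from bspec[OF this f_mem] f_ne_0 show False
      by simp
  qed
  moreover have "exceptional_set \<kappa> T \<subseteq> cspace (nparams \<kappa>)"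
    by (auto simp: exceptional_set_def)
  ultimately have "exceptional_set \<kappa> T \<subset> cspace (nparams \<kappa>)"
    using w by blast
  moreover have "alg_variety (nparams \<kappa>) (exceptional_set \<kappa> T)"
    unfolding alg_variety_def exceptional_set_def
    by (rule exI[of _ "exceptional_polys \<kappa> T"]) (simp add: poly_fun_exceptional_polys)
  ultimately show ?thesis
    by (simp add: proper_variety_def)
qed

lemma exceptional_set_minor_ne_0:
  assumes "z \<in> cspace (nparams \<kappa>)" "z \<notin> exceptional_set \<kappa> T" "T' \<noteq> T"
  obtains r c where "admissible_minor \<kappa> r c" "minor_poly \<kappa> T T' r c z \<noteq> 0"
proof -
  obtain f where "f \<in> exceptional_polys \<kappa> T" "f z \<noteq> 0"
    using assms(1,2) unfolding exceptional_set_def by blast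
  then obtain T1 T2 r1 c1 r2 c2 where T12: "T1 \<noteq> T" "T2 \<noteq> T" "T1 \<noteq> T2"
    and adm: "admissible_minor \<kappa> r1 c1" "admissible_minor \<kappa> r2 c2"
    and ne_0: "minor_poly \<kappa> T T1 r1 c1 z \<noteq> 0" "minor_poly \<kappa> T T2 r2 c2 z \<noteq> 0"
    unfolding exceptional_polys_def by auto
  show thesis
    using quartet_other_cases[OF T12 assms(3)] that adm ne_0 by blast
qed

lemma exceptional_set_unique:
  assumes \<kappa>: "2 \<le> \<kappa>"
    and P: "P \<in> gm_image \<kappa> T (exceptional_set \<kappa> T)" "P \<in> gm_image \<kappa> T' (exceptional_set \<kappa> T')"
  shows "T = T'"
proof (rule ccontr)
  assume "T \<noteq> T'"
  obtain x where x: "x \<in> stoch_params \<kappa>" "cvec x \<notin> exceptional_set \<kappa> T" "P = gm_phi \<kappa> T x"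
    using P(1) unfolding gm_image_def by blast
  obtain y where y: "P = gm_phi \<kappa> T' y"
    using P(2) unfolding gm_image_def by blast
  have "x \<in> rspace (nparams \<kappa>)"
    using x(1) by (simp add: stoch_params_def)
  then have x_cspace: "cvec x \<in> cspace (nparams \<kappa>)"
    by (simp add: rspace_def cspace_def cvec_def)
  obtain r c where adm: "admissible_minor \<kappa> r c" and "minor_poly \<kappa> T T' r c (cvec x) \<noteq> 0"
    using exceptional_set_minor_ne_0[OF x_cspace x(2)] \<open>T \<noteq> T'\<close> by metis
  moreover have "gm_phi_poly \<kappa> T (cvec x) = gm_phi_poly \<kappa> T' (cvec y)"
    using x(3) y by (simp add: fun_eq_iff gm_phi_poly_cvec)
  moreover have "split_minor \<kappa> T' r c (gm_phi_poly \<kappa> T' (cvec y)) = 0"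
    by (rule split_minor_gm_phi_poly_own_tree_eq_0[OF adm])
  ultimately show False
    by (simp add: minor_poly_def truncate_vec_cspace[OF x_cspace])
qed

theorem proposition11:
  fixes \<kappa> :: nat
  assumes "2 \<le> \<kappa>"
  shows "\<exists>X :: quartet \<Rightarrow> (nat \<Rightarrow> complex) set.
           (\<forall>T. proper_variety (nparams \<kappa>) (X T)) \<and>
           (\<forall>P. (\<exists>T. P \<in> gm_image \<kappa> T (X T)) \<longrightarrow> (\<exists>!T. P \<in> gm_image \<kappa> T (X T)))"
proof (intro exI[of _ "exceptional_set \<kappa>"] conjI allI impI)
  fix T
  show "proper_variety (nparams \<kappa>) (exceptional_set \<kappa> T)"
    by (rule proper_variety_exceptional_set[OF assms])
next
  fix P
  assume "\<exists>T. P \<in> gm_image \<kappa> T (exceptional_set \<kappa> T)"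
  then show "\<exists>!T. P \<in> gm_image \<kappa> T (exceptional_set \<kappa> T)"
    using exceptional_set_unique[OF assms] by blast
qed

end
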